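(* Let $X$ be a complex Banach space, $\mathcal{F}$ an algebra with unit, $\mathcal{E}\subseteq\mathcal{F}$ a (not necessarily unital) subalgebra, and $\Phi:\mathcal{E}\to\mathcal{L}(X)$ an algebra homomorphism such that $\mathcal{F}$ is anchored in $\mathcal{E}$. Then there is a unique calculus $\widehat{\Phi}:\mathcal{F}\to\mathcal{C}(X)$ such that $\widehat{\Phi}|_{\mathcal{E}}=\Phi$.
   Context: $\mathcal{F}$ need not be commutative. $\mathcal{L}(X)$, $\mathcal{C}(X)$: bounded, resp. closed linear operators on $X$; operator inclusions are graph inclusions, sums/products have natural domains, "$Tx=y$" means $x\in\mathrm{dom}(T)$, $Tx=y$. For $f\in\mathcal{F}$, $[f]_{\mathcal{E}}=\{e\in\mathcal{E}: ef\in\mathcal{E}\}$; $f$ is anchored in $\mathcal{E}$ (w.r.t. $\Phi$) if $[f]_{\mathcal{E}}\neq\emptyset$ and $\bigcap_{e\in[f]_{\mathcal{E}}}\ker\Phi(e)=\{0\}$; $\mathcal{F}$ is anchored in $\mathcal{E}$ if every $f\in\mathcal{F}$ is. A proto-calculus is a map $\Psi:\mathcal{F}\to\mathcal{C}(X)$ with (FC1) $\Psi(\mathbf{1})=I$; (FC2) $\lambda\Psi(f)\subseteq\Psi(\lambda f)$, $\Psi(f)+\Psi(g)\subseteq\Psi(f+g)$; (FC3) $\Psi(f)\Psi(g)\subseteq\Psi(fg)$ with $\mathrm{dom}(\Psi(f)\Psi(g))=\mathrm{dom}(\Psi(g))\cap\mathrm{dom}(\Psi(fg))$. It is a calculus if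 in addition, with $\mathrm{bdd}=\{g:\Psi(g)\in\mathcal{L}(X)\}$ and $\mathrm{reg}(f,\Psi)=\{e: e,ef\in\mathrm{bdd}\}$, for every $f\in\mathcal{F}$ and $x,y\in X$: $\Psi(f)x=y\iff\Psi(ef)x=\Psi(e)y$ for all $e\in\mathrm{reg}(f,\Psi)$. *)

theory Defs
  imports "HOL-Analysis.Analysis"
begin

definition complex_banach :: "(complex \<Rightarrow> 'x::banach \<Rightarrow> 'x) \<Rightarrow> bool" where
  "complex_banach sm \<longleftrightarrow>
     (\<forall>r x. sm (complex_of_real r) x = r *\<^sub>R x) \<and>
     (\<forall>a b x. sm (a * b) x = sm a (sm b x)) \<and>
     (\<forall>a b x. sm (a + b) x = sm a x + sm b x) \<and>
     (\<forall>a x y. sm a (x + y) = sm a x + sm a y) \<and>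
     (\<forall>a x. norm (sm a x) = cmod a * norm x)"

definition complex_algebra :: "(complex \<Rightarrow> 'f::{ring,monoid_mult} \<Rightarrow> 'f) \<Rightarrow> bool" where
  "complex_algebra sm \<longleftrightarrow>
     (\<forall>f. sm 1 f = f) \<and>
     (\<forall>a b f. sm (a * b) f = sm a (sm b f)) \<and>
     (\<forall>a b f. sm (a + b) f = sm a f + sm b f) \<and>
     (\<forall>a f g. sm a (f + g) = sm a f + sm a g) \<and>
     (\<forall>a f g. sm a (f * g) = sm a f * g) \<and>
     (\<forall>a f g. sm a (f * g) = f * sm a g)"

definition subalgebra :: "(complex \<Rightarrow> 'f::{ring,monoid_mult} \<Rightarrow> 'f) \<Rightarrow> 'f set \<Rightarrow> bool" where
  "subalgebra sm E \<longleftrightarrow> 0 \<in> E \<and>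
     (\<forall>e\<in>E. \<forall>e'\<in>E. e + e' \<in> E \<and> e * e' \<in> E) \<and>
     (\<forall>a. \<forall>e\<in>E. sm a e \<in> E)"

definition bounded_clinear_op :: "(complex \<Rightarrow> 'x::banach \<Rightarrow> 'x) \<Rightarrow> ('x \<Rightarrow> 'x) \<Rightarrow> bool" where
  "bounded_clinear_op sm T \<longleftrightarrow> bounded_linear T \<and> (\<forall>c x. T (sm c x) = sm c (T x))"

definition alg_hom_into_L ::
  "(complex \<Rightarrow> 'f::{ring,monoid_mult} \<Rightarrow> 'f) \<Rightarrow> (complex \<Rightarrow> 'x::banach \<Rightarrow> 'x)
     \<Rightarrow> 'f set \<Rightarrow> ('f \<Rightarrow> 'x \<Rightarrow> 'x) \<Rightarrow> bool" where
  "alg_hom_into_L smF smX E \<Phi> \<longleftrightarrow>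
     (\<forall>e\<in>E. bounded_clinear_op smX (\<Phi> e)) \<and>
     (\<forall>e\<in>E. \<forall>e'\<in>E. \<Phi> (e + e') = (\<lambda>x. \<Phi> e x + \<Phi> e' x)) \<and>
     (\<forall>a. \<forall>e\<in>E. \<Phi> (smF a e) = (\<lambda>x. smX a (\<Phi> e x))) \<and>
     (\<forall>e\<in>E. \<forall>e'\<in>E. \<Phi> (e * e') = \<Phi> e \<circ> \<Phi> e')"

definition anchor_set :: "'f::{ring,monoid_mult} set \<Rightarrow> 'f \<Rightarrow> 'f set" where
  "anchor_set E f = {e \<in> E. e * f \<in> E}"

definition anchored :: "'f::{ring,monoid_mult} set \<Rightarrow> ('f \<Rightarrow> 'x::banach \<Rightarrow> 'x) \<Rightarrow> 'f \<Rightarrow> bool" where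
  "anchored E \<Phi> f \<longleftrightarrow> anchor_set E f \<noteq> {} \<and>
     (\<Inter>e\<in>anchor_set E f. {x. \<Phi> e x = 0}) = {0}"

text \<open>Linear operators are represented by their graphs (subsets of X \<times> X);
operator inclusion is graph inclusion, sums and products have natural domains.\<close>

definition op_graph :: "('x \<Rightarrow> 'x) \<Rightarrow> ('x \<times> 'x) set" where
  "op_graph T = {(x, T x) | x. True}"

definition op_id :: "('x \<times> 'x) set" where
  "op_id = {(x, x) | x. True}"

definition op_scale :: "(complex \<Rightarrow> 'x \<Rightarrow> 'x) \<Rightarrow> complex \<Rightarrow> ('x \<times> 'x) set \<Rightarrow> ('x \<times> 'x) set" where
  "op_scale sm c A = {(x, sm c y) | x y. (x, y) \<in> A}"

definition op_add :: "('x::plus \<times> 'x) set \<Rightarrow> ('x \<times> 'x) set \<Rightarrow> ('x \<times> 'x) set" where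
  "op_add A B = {(x, y + z) | x y z. (x, y) \<in> A \<and> (x, z) \<in> B}"

text \<open>op_comp A B is the product A B (first B, then A).\<close>
definition op_comp :: "('x \<times> 'x) set \<Rightarrow> ('x \<times> 'x) set \<Rightarrow> ('x \<times> 'x) set" where
  "op_comp A B = {(x, z) | x z. \<exists>y. (x, y) \<in> B \<and> (y, z) \<in> A}"

definition closed_op :: "(complex \<Rightarrow> 'x::banach \<Rightarrow> 'x) \<Rightarrow> ('x \<times> 'x) set \<Rightarrow> bool" where
  "closed_op sm A \<longleftrightarrow>
     (\<forall>x y z. (x, y) \<in> A \<longrightarrow> (x, z) \<in> A \<longrightarrow> y = z) \<and>
     (0, 0) \<in> A \<and>
     (\<forall>x y x' y'. (x, y) \<in> A \<longrightarrow> (x', y') \<in> A \<longrightarrow> (x + x', y + y') \<in> A) \<and>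
     (\<forall>c x y. (x, y) \<in> A \<longrightarrow> (sm c x, sm c y) \<in> A) \<and>
     closed A"

definition is_bounded_op :: "(complex \<Rightarrow> 'x::banach \<Rightarrow> 'x) \<Rightarrow> ('x \<times> 'x) set \<Rightarrow> bool" where
  "is_bounded_op sm A \<longleftrightarrow> (\<exists>T. bounded_clinear_op sm T \<and> A = op_graph T)"

definition proto_calculus ::
  "(complex \<Rightarrow> 'f::{ring,monoid_mult} \<Rightarrow> 'f) \<Rightarrow> (complex \<Rightarrow> 'x::banach \<Rightarrow> 'x)
     \<Rightarrow> ('f \<Rightarrow> ('x \<times> 'x) set) \<Rightarrow> bool" where
  "proto_calculus smF smX \<Psi> \<longleftrightarrow>
     (\<forall>f. closed_op smX (\<Psi> f)) \<and>
     \<Psi> 1 = op_id \<and>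
     (\<forall>c f. op_scale smX c (\<Psi> f) \<subseteq> \<Psi> (smF c f)) \<and>
     (\<forall>f g. op_add (\<Psi> f) (\<Psi> g) \<subseteq> \<Psi> (f + g)) \<and>
     (\<forall>f g. op_comp (\<Psi> f) (\<Psi> g) \<subseteq> \<Psi> (f * g) \<and>
            Domain (op_comp (\<Psi> f) (\<Psi> g)) = Domain (\<Psi> g) \<inter> Domain (\<Psi> (f * g)))"

definition reg_set ::
  "(complex \<Rightarrow> 'x::banach \<Rightarrow> 'x) \<Rightarrow> ('f::{ring,monoid_mult} \<Rightarrow> ('x \<times> 'x) set) \<Rightarrow> 'f \<Rightarrow> 'f set" where
  "reg_set smX \<Psi> f = {e. is_bounded_op smX (\<Psi> e) \<and> is_bounded_op smX (\<Psi> (e * f))}"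

text \<open>"\<Psi>(ef)x = \<Psi>(e)y" means both sides are defined and equal.\<close>
definition calculus ::
  "(complex \<Rightarrow> 'f::{ring,monoid_mult} \<Rightarrow> 'f) \<Rightarrow> (complex \<Rightarrow> 'x::banach \<Rightarrow> 'x)
     \<Rightarrow> ('f \<Rightarrow> ('x \<times> 'x) set) \<Rightarrow> bool" where
  "calculus smF smX \<Psi> \<longleftrightarrow> proto_calculus smF smX \<Psi> \<and>
     (\<forall>f x y. (x, y) \<in> \<Psi> f \<longleftrightarrow>
        (\<forall>e \<in> reg_set smX \<Psi> f. \<exists>z. (x, z) \<in> \<Psi> (e * f) \<and> (y, z) \<in> \<Psi> e))"

end

theory Submission
  imports Defs
begin

text \<open>Anchoring says that the operators \<open>\<Phi> e\<close>, \<open>e \<in> [f]\<^sub>E\<close>, jointly separate the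
points of X. Hence the relation \<open>\<Phi>(e f) x = \<Phi>(e) y\<close> for all \<open>e \<in> [f]\<^sub>E\<close> defines a
single-valued operator \<open>\<Phi>\<^sup>^(f)\<close>; it is closed because each \<open>\<Phi> e\<close> is bounded, and the
rules (FC1)--(FC3) follow by cancelling a common factor \<open>\<Phi> d\<close>, \<open>d\<close> ranging over a
suitable anchor set. Since \<open>[f]\<^sub>E \<subseteq> reg(f, \<Psi>)\<close> for every calculus \<open>\<Psi>\<close> extending \<open>\<Phi>\<close>,
the regularity condition forces \<open>\<Psi>(f) \<subseteq> \<Phi>\<^sup>^(f)\<close>. Conversely, if \<open>\<Psi>(e) = T\<close> and
\<open>\<Psi>(ef) = S\<close> are bounded and \<open>\<Phi>\<^sup>^(f) x = y\<close>, then \<open>T\<close> and \<open>S\<close> are restrictions of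
\<open>\<Phi>\<^sup>^(e)\<close> and \<open>\<Phi>\<^sup>^(ef)\<close>, and the product rule for \<open>\<Phi>\<^sup>^\<close> gives \<open>S x = T y\<close>; so
\<open>\<Psi>(f) = \<Phi>\<^sup>^(f)\<close>.\<close>

locale anchored_algebra_hom =
  fixes smX :: "complex \<Rightarrow> 'x::banach \<Rightarrow> 'x"
    and smF :: "complex \<Rightarrow> 'f::{ring,monoid_mult} \<Rightarrow> 'f"
    and E :: "'f set"
    and \<Phi> :: "'f \<Rightarrow> 'x \<Rightarrow> 'x"
  assumes algebra: "complex_algebra smF"
    and subalg: "subalgebra smF E"
    and hom: "alg_hom_into_L smF smX E \<Phi>"
    and anchored: "\<forall>f. anchored E \<Phi> f"
begin

lemma zero_mem: "0 \<in> E"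
  and add_mem: "e \<in> E \<Longrightarrow> e' \<in> E \<Longrightarrow> e + e' \<in> E"
  and mult_mem: "e \<in> E \<Longrightarrow> e' \<in> E \<Longrightarrow> e * e' \<in> E"
  and scale_mem: "e \<in> E \<Longrightarrow> smF c e \<in> E"
  using subalg by (simp_all add: subalgebra_def)

lemma smF_zero: "smF 0 f = 0"
  using algebra unfolding complex_algebra_def by (metis add_cancel_right_right)

lemma smF_minus_one: "smF (-1) f = - f"
proof -
  have "smF 1 f + smF (-1) f = 0"
    using algebra smF_zero unfolding complex_algebra_def by (metis add.right_inverse)
  then show ?thesis
    using algebra by (simp add: complex_algebra_def eq_neg_iff_add_eq_0 add.commute)
qed

lemma diff_mem: "e \<in> E \<Longrightarrow> e' \<in> E \<Longrightarrow> e - e' \<in> E"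
  using add_mem[of e "smF (-1) e'"] scale_mem[of e' "-1"] by (simp add: smF_minus_one)

lemma bounded_clinear_op_Phi: "e \<in> E \<Longrightarrow> bounded_clinear_op smX (\<Phi> e)"
  and Phi_add: "e \<in> E \<Longrightarrow> e' \<in> E \<Longrightarrow> \<Phi> (e + e') x = \<Phi> e x + \<Phi> e' x"
  and Phi_scale: "e \<in> E \<Longrightarrow> \<Phi> (smF c e) x = smX c (\<Phi> e x)"
  and Phi_mult: "e \<in> E \<Longrightarrow> e' \<in> E \<Longrightarrow> \<Phi> (e * e') x = \<Phi> e (\<Phi> e' x)"
  using hom by (simp_all add: alg_hom_into_L_def)

lemma bounded_linear_Phi: "e \<in> E \<Longrightarrow> bounded_linear (\<Phi> e)"
  and Phi_commute_scale: "e \<in> E \<Longrightarrow> \<Phi> e (smX c x) = smX c (\<Phi> e x)"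
  using bounded_clinear_op_Phi by (simp_all add: bounded_clinear_op_def)

lemma Phi_add_right: "e \<in> E \<Longrightarrow> \<Phi> e (x + y) = \<Phi> e x + \<Phi> e y"
  and Phi_diff_right: "e \<in> E \<Longrightarrow> \<Phi> e (x - y) = \<Phi> e x - \<Phi> e y"
  and Phi_zero_right: "e \<in> E \<Longrightarrow> \<Phi> e 0 = 0"
  using bounded_linear_Phi by (simp_all add: linear_simps)

lemma Phi_zero: "\<Phi> 0 x = 0"
  using Phi_add[OF zero_mem zero_mem, of x] by simp

lemma anchored_cancel:
  assumes "\<And>d. d \<in> anchor_set E g \<Longrightarrow> \<Phi> d v = \<Phi> d w"
  shows "v = w"
proof -
  have "\<Phi> d (v - w) = 0" if "d \<in> anchor_set E g" for d
    using that assms by (simp add: anchor_set_def Phi_diff_right)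
  then have "v - w = 0"
    using anchored unfolding anchored_def by blast
  then show ?thesis by simp
qed

lemma anchored_cancel_left:
  assumes "a \<in> E" "b \<in> E"
    and "\<And>d. d \<in> E \<Longrightarrow> d * g \<in> E \<Longrightarrow> \<Phi> (d * a) x = \<Phi> (d * b) y"
  shows "\<Phi> a x = \<Phi> b y"
  by (rule anchored_cancel[of g]) (use assms Phi_mult in \<open>auto simp: anchor_set_def\<close>)

definition Phi_hat :: "'f \<Rightarrow> ('x \<times> 'x) set" where
  "Phi_hat f = {(x, y). \<forall>e\<in>anchor_set E f. \<Phi> (e * f) x = \<Phi> e y}"

lemma Phi_hat_iff:
  "(x, y) \<in> Phi_hat f \<longleftrightarrow> (\<forall>e. e \<in> E \<longrightarrow> e * f \<in> E \<longrightarrow> \<Phi> (e * f) x = \<Phi> e y)"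
  by (auto simp: Phi_hat_def anchor_set_def)

lemma Phi_hatD: "(x, y) \<in> Phi_hat f \<Longrightarrow> e \<in> E \<Longrightarrow> e * f \<in> E \<Longrightarrow> \<Phi> (e * f) x = \<Phi> e y"
  by (simp add: Phi_hat_iff)

lemma Phi_hat_single_valued: "(x, y) \<in> Phi_hat f \<Longrightarrow> (x, z) \<in> Phi_hat f \<Longrightarrow> y = z"
  by (rule anchored_cancel[of f]) (auto simp: Phi_hat_def)

lemma Phi_hat_eq_op_graph: "e \<in> E \<Longrightarrow> Phi_hat e = op_graph (\<Phi> e)"
proof -
  assume e: "e \<in> E"
  then have graph: "(x, \<Phi> e x) \<in> Phi_hat e" for x
    by (simp add: Phi_hat_iff Phi_mult)
  show ?thesis
    unfolding op_graph_def using graph Phi_hat_single_valued by fastforce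
qed

lemma Phi_hat_mult:
  assumes xy: "(x, y) \<in> Phi_hat g" and yz: "(y, z) \<in> Phi_hat f"
  shows "(x, z) \<in> Phi_hat (f * g)"
  unfolding Phi_hat_iff
proof (intro allI impI)
  fix e assume e: "e \<in> E" "e * (f * g) \<in> E"
  show "\<Phi> (e * (f * g)) x = \<Phi> e z"
  proof (rule anchored_cancel_left[OF e(2) e(1), of "e * f"])
    fix d assume d: "d \<in> E" "d * (e * f) \<in> E"
    have "\<Phi> (d * (e * (f * g))) x = \<Phi> (d * (e * f) * g) x"
      by (simp add: mult.assoc)
    also have "\<dots> = \<Phi> (d * (e * f)) y"
      using Phi_hatD[OF xy d(2)] mult_mem[OF d(1) e(2)] by (simp add: mult.assoc)
    also have "\<dots> = \<Phi> (d * e) z"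
      using Phi_hatD[OF yz mult_mem[OF d(1) e(1)]] d by (simp add: mult.assoc)
    finally show "\<Phi> (d * (e * (f * g))) x = \<Phi> (d * e) z" .
  qed
qed

lemma Phi_hat_mult_cancel:
  assumes xy: "(x, y) \<in> Phi_hat g" and xz: "(x, z) \<in> Phi_hat (f * g)"
  shows "(y, z) \<in> Phi_hat f"
  unfolding Phi_hat_iff
proof (intro allI impI)
  fix e assume e: "e \<in> E" "e * f \<in> E"
  show "\<Phi> (e * f) y = \<Phi> e z"
  proof (rule anchored_cancel_left[OF e(2) e(1), of "e * f * g"])
    fix d assume d: "d \<in> E" "d * (e * f * g) \<in> E"
    have "\<Phi> (d * (e * f)) y = \<Phi> (d * (e * f) * g) x"
      using Phi_hatD[OF xy mult_mem[OF d(1) e(2)]] d by (simp add: mult.assoc)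
    also have "\<dots> = \<Phi> (d * e) z"
      using Phi_hatD[OF xz mult_mem[OF d(1) e(1)]] d by (simp add: mult.assoc)
    finally show "\<Phi> (d * (e * f)) y = \<Phi> (d * e) z" .
  qed
qed

lemma Phi_hat_add:
  assumes xy: "(x, y) \<in> Phi_hat f" and xz: "(x, z) \<in> Phi_hat g"
  shows "(x, y + z) \<in> Phi_hat (f + g)"
  unfolding Phi_hat_iff
proof (intro allI impI)
  fix e assume e: "e \<in> E" "e * (f + g) \<in> E"
  show "\<Phi> (e * (f + g)) x = \<Phi> e (y + z)"
  proof (rule anchored_cancel_left[OF e(2) e(1), of "e * f"])
    fix d assume d: "d \<in> E" "d * (e * f) \<in> E"
    have de: "d * e \<in> E" and def: "d * e * f \<in> E" and defg: "d * e * (f + g) \<in> E"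
      using d mult_mem[OF d(1) e(1)] mult_mem[OF d(1) e(2)] by (simp_all add: mult.assoc)
    have "d * e * g = d * e * (f + g) - d * e * f"
      by (simp add: algebra_simps)
    then have deg: "d * e * g \<in> E"
      using diff_mem[OF defg def] by simp
    have "\<Phi> (d * (e * (f + g))) x = \<Phi> (d * e * f) x + \<Phi> (d * e * g) x"
      using Phi_add[OF def deg] by (simp add: algebra_simps)
    also have "\<dots> = \<Phi> (d * e) y + \<Phi> (d * e) z"
      using Phi_hatD[OF xy de def] Phi_hatD[OF xz de deg] by simp
    also have "\<dots> = \<Phi> (d * e) (y + z)"
      using Phi_add_right[OF de] by simp
    finally show "\<Phi> (d * (e * (f + g))) x = \<Phi> (d * e) (y + z)" .
  qed
qed

text \<open>For \<open>c \<noteq> 0\<close> the anchor sets of \<open>f\<close> and \<open>c f\<close> coincide; for \<open>c = 0\<close> both sides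
vanish, the right one because \<open>smX 0 (\<Phi> e y) = \<Phi> (smF 0 e) y = \<Phi> 0 y\<close>.\<close>
lemma Phi_hat_scale:
  assumes xy: "(x, y) \<in> Phi_hat f"
  shows "(x, smX c y) \<in> Phi_hat (smF c f)"
  unfolding Phi_hat_iff
proof (intro allI impI)
  fix e assume e: "e \<in> E" "e * smF c f \<in> E"
  have pull: "e * smF c f = smF c (e * f)"
    using algebra unfolding complex_algebra_def by metis
  show "\<Phi> (e * smF c f) x = \<Phi> e (smX c y)"
  proof (cases "c = 0")
    case True
    then show ?thesis
      using e Phi_commute_scale Phi_scale[of e 0] by (simp add: pull smF_zero Phi_zero)
  next
    case False
    have "smF (1 / c) (e * smF c f) = e * f"
      using algebra False unfolding pull complex_algebra_def by (metis nonzero_divide_eq_eq)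
    then have ef: "e * f \<in> E"
      using scale_mem[OF e(2)] by metis
    have "\<Phi> (e * smF c f) x = smX c (\<Phi> (e * f) x)"
      using Phi_scale[OF ef] by (simp add: pull)
    also have "\<dots> = smX c (\<Phi> e y)"
      using Phi_hatD[OF xy e(1) ef] by simp
    finally show ?thesis
      using Phi_commute_scale e by simp
  qed
qed

lemma closed_Phi_hat: "closed (Phi_hat f)"
proof -
  have "Phi_hat f = (\<Inter>e\<in>anchor_set E f. {p. \<Phi> (e * f) (fst p) = \<Phi> e (snd p)})"
    by (auto simp: Phi_hat_def)
  moreover have "closed {p. \<Phi> (e * f) (fst p) = \<Phi> e (snd p)}" if "e \<in> anchor_set E f" for e
  proof -
    have "bounded_linear (\<Phi> (e * f))" "bounded_linear (\<Phi> e)"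
      using that bounded_linear_Phi by (auto simp: anchor_set_def)
    then show ?thesis
      using closed_Collect_eq
        bounded_linear.continuous_on[OF _ continuous_on_fst[OF continuous_on_id]]
        bounded_linear.continuous_on[OF _ continuous_on_snd[OF continuous_on_id]]
      by blast
  qed
  ultimately show ?thesis by auto
qed

lemma closed_op_Phi_hat: "closed_op smX (Phi_hat f)"
  unfolding closed_op_def
proof (intro conjI allI impI)
  show "(0, 0) \<in> Phi_hat f"
    by (simp add: Phi_hat_iff Phi_zero_right)
  show "(x + x', y + y') \<in> Phi_hat f" if "(x, y) \<in> Phi_hat f" "(x', y') \<in> Phi_hat f" for x y x' y'
    using that by (simp add: Phi_hat_iff Phi_add_right)
  show "(smX c x, smX c y) \<in> Phi_hat f" if "(x, y) \<in> Phi_hat f" for c x y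
    using that by (simp add: Phi_hat_iff Phi_commute_scale)
qed (use Phi_hat_single_valued closed_Phi_hat in blast)+

lemma Phi_hat_one: "Phi_hat 1 = op_id"
proof -
  have "(x, y) \<in> Phi_hat 1 \<longleftrightarrow> x = y" for x y
    using anchored_cancel[of 1 x y] by (auto simp: Phi_hat_def anchor_set_def)
  then show ?thesis
    unfolding op_id_def by auto
qed

lemma Domain_op_comp_Phi_hat:
  "Domain (op_comp (Phi_hat f) (Phi_hat g)) = Domain (Phi_hat g) \<inter> Domain (Phi_hat (f * g))"
proof (intro equalityI subsetI)
  fix x assume "x \<in> Domain (op_comp (Phi_hat f) (Phi_hat g))"
  then obtain y z where "(x, y) \<in> Phi_hat g" "(y, z) \<in> Phi_hat f"
    by (auto simp: op_comp_def)
  then show "x \<in> Domain (Phi_hat g) \<inter> Domain (Phi_hat (f * g))"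
    using Phi_hat_mult by blast
next
  fix x assume "x \<in> Domain (Phi_hat g) \<inter> Domain (Phi_hat (f * g))"
  then obtain y z where "(x, y) \<in> Phi_hat g" "(x, z) \<in> Phi_hat (f * g)"
    by blast
  then have "(x, z) \<in> op_comp (Phi_hat f) (Phi_hat g)"
    unfolding op_comp_def using Phi_hat_mult_cancel by blast
  then show "x \<in> Domain (op_comp (Phi_hat f) (Phi_hat g))"
    by blast
qed

lemma proto_calculus_Phi_hat: "proto_calculus smF smX Phi_hat"
  unfolding proto_calculus_def
proof (intro conjI allI)
  show "op_scale smX c (Phi_hat f) \<subseteq> Phi_hat (smF c f)" for c f
    by (auto simp: op_scale_def Phi_hat_scale)
  show "op_add (Phi_hat f) (Phi_hat g) \<subseteq> Phi_hat (f + g)" for f g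
    by (auto simp: op_add_def Phi_hat_add)
  show "op_comp (Phi_hat f) (Phi_hat g) \<subseteq> Phi_hat (f * g)" for f g
    by (auto simp: op_comp_def intro: Phi_hat_mult)
qed (simp_all add: closed_op_Phi_hat Phi_hat_one Domain_op_comp_Phi_hat)

text \<open>Every element of \<open>[f]\<^sub>E\<close> regularizes \<open>f\<close> for any \<open>\<Psi>\<close> extending \<open>\<Phi>\<close>.\<close>
lemma Phi_hat_if_regularized:
  assumes extends: "\<forall>e\<in>E. \<Psi> e = op_graph (\<Phi> e)"
    and reg: "\<forall>e\<in>reg_set smX \<Psi> f. \<exists>z. (x, z) \<in> \<Psi> (e * f) \<and> (y, z) \<in> \<Psi> e"
  shows "(x, y) \<in> Phi_hat f"
  unfolding Phi_hat_iff
proof (intro allI impI)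
  fix e assume e: "e \<in> E" "e * f \<in> E"
  then have "e \<in> reg_set smX \<Psi> f"
    using extends bounded_clinear_op_Phi by (auto simp: reg_set_def is_bounded_op_def)
  then obtain z where "(x, z) \<in> \<Psi> (e * f)" "(y, z) \<in> \<Psi> e"
    using reg by blast
  then show "\<Phi> (e * f) x = \<Phi> e y"
    using e extends by (simp add: op_graph_def)
qed

lemma calculus_Phi_hat: "calculus smF smX Phi_hat"
  unfolding calculus_def
proof (intro conjI allI iffI)
  fix f x y
  assume xy: "(x, y) \<in> Phi_hat f"
  show "\<forall>e\<in>reg_set smX Phi_hat f. \<exists>z. (x, z) \<in> Phi_hat (e * f) \<and> (y, z) \<in> Phi_hat e"
  proof
    fix e assume "e \<in> reg_set smX Phi_hat f"
    then obtain T where "Phi_hat e = op_graph T"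
      by (auto simp: reg_set_def is_bounded_op_def)
    then have "(y, T y) \<in> Phi_hat e"
      by (simp add: op_graph_def)
    with xy show "\<exists>z. (x, z) \<in> Phi_hat (e * f) \<and> (y, z) \<in> Phi_hat e"
      using Phi_hat_mult by blast
  qed
next
  fix f x y
  assume "\<forall>e\<in>reg_set smX Phi_hat f. \<exists>z. (x, z) \<in> Phi_hat (e * f) \<and> (y, z) \<in> Phi_hat e"
  then show "(x, y) \<in> Phi_hat f"
    using Phi_hat_if_regularized Phi_hat_eq_op_graph by blast
qed (rule proto_calculus_Phi_hat)

lemma calculus_extending_Phi_eq_Phi_hat:
  assumes calc: "calculus smF smX \<Psi>" and extends: "\<forall>e\<in>E. \<Psi> e = op_graph (\<Phi> e)"
  shows "\<Psi> = Phi_hat"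
proof -
  have regular: "(x, y) \<in> \<Psi> f \<longleftrightarrow>
      (\<forall>e\<in>reg_set smX \<Psi> f. \<exists>z. (x, z) \<in> \<Psi> (e * f) \<and> (y, z) \<in> \<Psi> e)" for f x y
    using calc unfolding calculus_def by blast
  have sub: "\<Psi> f \<subseteq> Phi_hat f" for f
  proof (rule subrelI)
    fix x y assume "(x, y) \<in> \<Psi> f"
    then show "(x, y) \<in> Phi_hat f"
      using regular Phi_hat_if_regularized[OF extends] by blast
  qed
  have "(x, y) \<in> \<Psi> f" if xy: "(x, y) \<in> Phi_hat f" for f x y
  proof (rule regular[THEN iffD2], intro ballI)
    fix e assume "e \<in> reg_set smX \<Psi> f"
    then obtain T S where T: "\<Psi> e = op_graph T" and S: "\<Psi> (e * f) = op_graph S"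
      by (auto simp: reg_set_def is_bounded_op_def)
    have "(y, T y) \<in> \<Psi> e" "(x, S x) \<in> \<Psi> (e * f)"
      using T S by (auto simp: op_graph_def)
    then have "(y, T y) \<in> Phi_hat e" "(x, S x) \<in> Phi_hat (e * f)"
      using sub by blast+
    then have "S x = T y"
      using xy Phi_hat_mult Phi_hat_single_valued by blast
    then show "\<exists>z. (x, z) \<in> \<Psi> (e * f) \<and> (y, z) \<in> \<Psi> e"
      using S T by (auto simp: op_graph_def)
  qed
  with sub show ?thesis
    by (intro ext subset_antisym subrelI) auto
qed

end

theorem theorem6p1:
  fixes smX :: "complex \<Rightarrow> 'x::banach \<Rightarrow> 'x"
    and smF :: "complex \<Rightarrow> 'f::{ring,monoid_mult} \<Rightarrow> 'f"
    and E :: "'f set"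
    and \<Phi> :: "'f \<Rightarrow> 'x \<Rightarrow> 'x"
  assumes "complex_banach smX"
    and "complex_algebra smF"
    and "subalgebra smF E"
    and "alg_hom_into_L smF smX E \<Phi>"
    and "\<forall>f. anchored E \<Phi> f"
  shows "\<exists>!\<Psi>. calculus smF smX \<Psi> \<and> (\<forall>e\<in>E. \<Psi> e = op_graph (\<Phi> e))"
proof -
  interpret anchored_algebra_hom smX smF E \<Phi>
    using assms(2-) by unfold_locales
  show ?thesis
  proof (rule ex1I[of _ Phi_hat])
    show "calculus smF smX Phi_hat \<and> (\<forall>e\<in>E. Phi_hat e = op_graph (\<Phi> e))"
      using calculus_Phi_hat Phi_hat_eq_op_graph by blast
  qed (use calculus_extending_Phi_eq_Phi_hat in blast)
qed

end
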